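(* Let $q$ be a prime power and let $\mathcal{L}$ be a Cameron-Liebler line class with parameter $x$ in $\mathrm{PG}(3,q)$. Suppose there is a point $P$ and a plane $\pi$ of $\mathrm{PG}(3,q)$ with $P\in\pi$ such that (1) $(\mathsf{Line}(\pi)\setminus \mathsf{Star}(P))\cap \mathcal{L}=\emptyset$, and (2) $\mathsf{Star}(P)\setminus \mathsf{Line}(\pi)\subseteq \mathcal{L}$. Then $$\mathcal{L}':=\bigl(\mathcal{L}\cup (\mathsf{Line}(\pi)\setminus \mathsf{Star}(P))\bigr)\setminus (\mathsf{Star}(P)\setminus \mathsf{Line}(\pi))$$ is a Cameron-Liebler line class in $\mathrm{PG}(3,q)$ with the same parameter $x$.
   Context: $\mathrm{PG}(3,q)$ is the 3-dimensional projective space over $\mathbb{F}_q$. A spread of $\mathrm{PG}(3,q)$ is a set of $q^2+1$ lines partitioning the point set. A set $\mathcal{L}$ of lines is a Cameron-Liebler line class with parameter $x$ if $x$ is a non-negative integer such that $|S\cap\mathcal{L}|=x$ for every spread $S$ of $\mathrm{PG}(3,q)$. For a point $P$, $\mathsf{Star}(P)$ denotes the set of all lines through $P$; for a plane $\pi$, $\mathsf{Line}(\pi)$ denotes the set of all lines contained in $\pi$. *)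

theory Defs
  imports "HOL-Analysis.Analysis"
begin

text \<open>PG(3,q) modelled as the lattice of subspaces of the vector space 'a^4 over a
finite field 'a (so q = CARD('a), automatically a prime power).
Points, lines, planes are the subspaces of (vector) dimension 1, 2, 3.
Incidence is containment.\<close>

definition pg_subspaces :: "nat \<Rightarrow> ('a::{finite,field} ^ 4) set set" where
  "pg_subspaces k = {W. vec.subspace W \<and> vec.dim W = k}"

abbreviation pg_points :: "('a::{finite,field} ^ 4) set set" where
  "pg_points \<equiv> pg_subspaces 1"

abbreviation pg_lines :: "('a::{finite,field} ^ 4) set set" where
  "pg_lines \<equiv> pg_subspaces 2"

abbreviation pg_planes :: "('a::{finite,field} ^ 4) set set" where
  "pg_planes \<equiv> pg_subspaces 3"

definition is_spread :: "('a::{finite,field} ^ 4) set set \<Rightarrow> bool" where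
  "is_spread S \<longleftrightarrow> S \<subseteq> pg_lines \<and> (\<forall>P\<in>pg_points. \<exists>!l. l \<in> S \<and> P \<subseteq> l)"

definition cameron_liebler :: "('a::{finite,field} ^ 4) set set \<Rightarrow> nat \<Rightarrow> bool" where
  "cameron_liebler L x \<longleftrightarrow> L \<subseteq> pg_lines \<and> (\<forall>S. is_spread S \<longrightarrow> card (S \<inter> L) = x)"

definition Star :: "('a::{finite,field} ^ 4) set \<Rightarrow> ('a ^ 4) set set" where
  "Star P = {l \<in> pg_lines. P \<subseteq> l}"

definition Line :: "('a::{finite,field} ^ 4) set \<Rightarrow> ('a ^ 4) set set" where
  "Line \<pi> = {l \<in> pg_lines. l \<subseteq> \<pi>}"

end

theory Submission imports Defs begin

text \<open>Every spread meets \<open>Star P\<close> in exactly one line (by definition) and \<open>Line \<pi>\<close> in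
exactly one line: counting nonzero vectors gives \<open>|S| = q\<^sup>2 + 1\<close>, and if no line of \<open>S\<close>
lay in \<open>\<pi>\<close>, each would meet \<open>\<pi>\<close> in a single point, forcing \<open>q\<^sup>3 - 1 = |S| (q - 1)\<close>.
If these two lines coincide, the modification does not touch \<open>S\<close>; otherwise it removes
the line through \<open>P\<close> (which lies in \<open>\<L>\<close> by (2)) and adds the line in \<open>\<pi>\<close> (which is
not in \<open>\<L>\<close> by (1)), so \<open>|S \<inter> \<L>'| = |S \<inter> \<L>|\<close>.\<close>

lemma card_span_independent:
  fixes B :: "('a::{finite,field}^'n) set"
  assumes "vec.independent B"
  shows "card (vec.span B) = CARD('a) ^ card B"
proof -
  have "finite B" using assms vec.finiteI_independent by blast
  then show ?thesis using assms
  proof (induction B rule: finite_induct)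
    case empty
    then show ?case by simp
  next
    case (insert b B)
    have ind: "vec.independent B" and nb: "b \<notin> vec.span B"
      using insert.prems insert.hyps by (auto simp: vec.independent_insert)
    define f where "f = (\<lambda>(k, y). k *s b + y :: 'a^'n)"
    have image: "f ` (UNIV \<times> vec.span B) = vec.span (insert b B)"
    proof
      show "f ` (UNIV \<times> vec.span B) \<subseteq> vec.span (insert b B)"
      proof clarify
        fix k y assume "y \<in> vec.span B"
        then show "f (k, y) \<in> vec.span (insert b B)"
          unfolding f_def vec.span_insert by (intro CollectI exI[of _ k]) simp
      qed
      show "vec.span (insert b B) \<subseteq> f ` (UNIV \<times> vec.span B)"
      proof
        fix z assume "z \<in> vec.span (insert b B)"
        then obtain k where "z - k *s b \<in> vec.span B" by (auto simp: vec.span_insert)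
        then show "z \<in> f ` (UNIV \<times> vec.span B)"
          unfolding f_def by (intro image_eqI[of _ _ "(k, z - k *s b)"]) auto
      qed
    qed
    have "inj_on f (UNIV \<times> vec.span B)"
    proof (rule inj_onI, clarify)
      fix k y k' y'
      assume y: "y \<in> vec.span B" and y': "y' \<in> vec.span B" and "f (k, y) = f (k', y')"
      then have e: "(k - k') *s b = y' - y"
        unfolding f_def by (simp add: algebra_simps)
      have "k = k'"
      proof (rule ccontr)
        assume "k \<noteq> k'"
        then have "b = inverse (k - k') *s ((k - k') *s b)"
          by (simp only: vector_smult_assoc) simp
        then have "b = inverse (k - k') *s (y' - y)"
          by (simp only: e)
        then show False using nb y y' by (simp add: vec.span_diff vec.span_scale)
      qed
      then show "k = k' \<and> y = y'" using e by simp
    qed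
    then have "card (vec.span (insert b B)) = CARD('a) * card (vec.span B)"
      using card_image image by (fastforce simp: card_cartesian_product)
    then show ?case using insert.IH[OF ind] insert.hyps by simp
  qed
qed

lemma card_subspace:
  fixes W :: "('a::{finite,field}^'n) set"
  assumes "vec.subspace W"
  shows "card W = CARD('a) ^ vec.dim W"
proof -
  obtain B where B: "B \<subseteq> W" "vec.independent B" "W \<subseteq> vec.span B" "card B = vec.dim W"
    using vec.basis_exists by blast
  then have "vec.span B = W" using vec.span_subspace assms by blast
  then show ?thesis using card_span_independent[OF B(2)] B(4) by simp
qed

lemma card_subspace_Diff_zero:
  fixes W :: "('a::{finite,field}^'n) set"
  assumes "vec.subspace W"
  shows "card (W - {0}) = CARD('a) ^ vec.dim W - 1"
  using card_subspace[OF assms] vec.subspace_0[OF assms] by (simp add: card_Diff_singleton)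

lemma CARD_field_ge_2: "CARD('a::{finite,field}) \<ge> 2"
proof -
  have "card {0::'a, 1} \<le> CARD('a)" by (rule card_mono) auto
  then show ?thesis by simp
qed

lemma dim_Int_ge:
  fixes A :: "('a::field^'n) set"
  assumes "vec.subspace A" "vec.subspace B" "vec.subspace W" "A \<subseteq> W" "B \<subseteq> W"
  shows "vec.dim A + vec.dim B \<le> vec.dim W + vec.dim (A \<inter> B)"
proof -
  have "{x + y |x y. x \<in> A \<and> y \<in> B} \<subseteq> W" using assms by (auto intro: vec.subspace_add)
  then have "vec.dim {x + y |x y. x \<in> A \<and> y \<in> B} \<le> vec.dim W" by (rule vec.dim_subset)
  then show ?thesis using vec.dim_sums_Int[OF assms(1,2)] by linarith
qed

lemma span_singleton_in_pg_points:
  fixes v :: "'a::{finite,field}^4"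
  assumes "v \<noteq> 0"
  shows "vec.span {v} \<in> pg_points"
proof -
  have "vec.independent {v}"
    using assms by (intro vec.independent_insertI) (auto simp: vec.independent_empty)
  then have "vec.dim (vec.span {v}) = 1" by (simp add: vec.dim_eq_card_independent)
  then show ?thesis by (simp add: pg_subspaces_def vec.subspace_span)
qed

lemma spread_lines_eqI:
  fixes v :: "'a::{finite,field}^4"
  assumes "is_spread S" "l \<in> S" "m \<in> S" "v \<noteq> 0" "v \<in> l" "v \<in> m"
  shows "l = m"
proof -
  have "vec.subspace l" "vec.subspace m"
    using assms(1-3) by (auto simp: is_spread_def pg_subspaces_def)
  then have "vec.span {v} \<subseteq> l" "vec.span {v} \<subseteq> m"
    using assms(5,6) vec.span_minimal[of "{v}"] by auto
  then show ?thesis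
    using assms(1-3) span_singleton_in_pg_points[OF assms(4)] unfolding is_spread_def by metis
qed

lemma spread_covers:
  fixes v :: "'a::{finite,field}^4"
  assumes "is_spread S" "v \<noteq> 0"
  obtains l where "l \<in> S" "v \<in> l"
proof -
  obtain l where "l \<in> S" "vec.span {v} \<subseteq> l"
    using assms span_singleton_in_pg_points unfolding is_spread_def by metis
  then show ?thesis using that vec.span_base[of v "{v}"] by blast
qed

lemma card_subspace_Diff_zero_spread:
  fixes S :: "('a::{finite,field}^4) set set"
  assumes "is_spread S"
  shows "card (W - {0}) = (\<Sum>l\<in>S. card (l \<inter> W - {0}))"
proof -
  have partition: "W - {0} = (\<Union>l\<in>S. l \<inter> W - {0})"
    using spread_covers[OF assms] by blast
  have "finite S" by (rule finite_subset[of _ UNIV]) auto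
  then show ?thesis
    unfolding partition
    by (rule card_UN_disjoint) (auto dest: spread_lines_eqI[OF assms])
qed

lemma card_spread:
  fixes S :: "('a::{finite,field}^4) set set"
  assumes "is_spread S"
  shows "card S = CARD('a)^2 + 1"
proof -
  let ?q = "CARD('a)"
  have "card ((UNIV::('a^4) set) - {0}) = (\<Sum>l\<in>S. ?q^2 - 1)"
    using card_subspace_Diff_zero_spread[OF assms, of UNIV] assms
    by (simp add: is_spread_def pg_subspaces_def card_subspace_Diff_zero subset_iff)
  then have "card S * (?q^2 - 1) = ?q^4 - 1"
    using card_subspace_Diff_zero[OF vec.subspace_UNIV] vec_dim_card[where 'a='a and 'n=4]
    by simp
  also have "\<dots> = (?q^2 + 1) * (?q^2 - 1)"
    by (simp add: power2_eq_square power4_eq_xxxx algebra_simps diff_mult_distrib)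
  finally have eq: "card S * (?q^2 - 1) = (?q^2 + 1) * (?q^2 - 1)" .
  have "?q^2 - 1 \<noteq> 0"
    using one_less_power[of ?q 2] CARD_field_ge_2[where 'a='a] by simp
  then show ?thesis by (rule mult_right_cancel[THEN iffD1, OF _ eq])
qed

lemma dim_line_Int_plane_ge_1:
  fixes l \<pi> :: "('a::{finite,field}^4) set"
  assumes "l \<in> pg_lines" "\<pi> \<in> pg_planes"
  shows "vec.dim (l \<inter> \<pi>) \<ge> 1"
  using dim_Int_ge[of l \<pi> UNIV] assms vec_dim_card[where 'a='a and 'n=4]
  by (simp add: pg_subspaces_def vec.subspace_UNIV)

lemma dim_line_Int_plane_eq_1:
  fixes l \<pi> :: "('a::{finite,field}^4) set"
  assumes l: "l \<in> pg_lines" and \<pi>: "\<pi> \<in> pg_planes" and "\<not> l \<subseteq> \<pi>"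
  shows "vec.dim (l \<inter> \<pi>) = 1"
proof -
  have sub: "vec.subspace (l \<inter> \<pi>)" "vec.subspace l"
    using l \<pi> by (auto simp: pg_subspaces_def intro: vec.subspace_inter)
  have "l \<inter> \<pi> \<noteq> l" using assms(3) by blast
  then have "\<not> vec.dim l \<le> vec.dim (l \<inter> \<pi>)"
    using vec.subspace_dim_equal[OF sub] by blast
  then show ?thesis
    using dim_line_Int_plane_ge_1[OF l \<pi>] l by (simp add: pg_subspaces_def)
qed

lemma spread_has_line_in_plane:
  fixes \<pi> :: "('a::{finite,field}^4) set"
  assumes S: "is_spread S" and \<pi>: "\<pi> \<in> pg_planes"
  shows "\<exists>m\<in>S. m \<subseteq> \<pi>"
proof (rule ccontr)
  let ?q = "CARD('a)"
  assume none: "\<not> (\<exists>m\<in>S. m \<subseteq> \<pi>)"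
  have \<pi>_subspace: "vec.subspace \<pi>" "vec.dim \<pi> = 3"
    using \<pi> by (auto simp: pg_subspaces_def)
  have "(?q^2 + ?q + 1) * (?q - 1) = ?q^3 - 1"
    by (cases ?q) (simp_all add: power2_eq_square power3_eq_cube algebra_simps)
  also have "\<dots> = card (\<pi> - {0})"
    using card_subspace_Diff_zero[OF \<pi>_subspace(1)] \<pi>_subspace(2) by simp
  also have "\<dots> = (\<Sum>l\<in>S. card (l \<inter> \<pi> - {0}))"
    by (rule card_subspace_Diff_zero_spread[OF S])
  also have "\<dots> = (\<Sum>l\<in>S. ?q - 1)"
  proof (rule sum.cong[OF refl])
    fix l assume l: "l \<in> S"
    then have "l \<in> pg_lines" using S by (auto simp: is_spread_def)
    then show "card (l \<inter> \<pi> - {0}) = ?q - 1"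
      using card_subspace_Diff_zero[of "l \<inter> \<pi>"] dim_line_Int_plane_eq_1[OF _ \<pi>] none l
        \<pi>_subspace(1) by (simp add: pg_subspaces_def vec.subspace_inter)
  qed
  also have "\<dots> = (?q^2 + 1) * (?q - 1)"
    using card_spread[OF S] by simp
  finally have eq: "(?q^2 + ?q + 1) * (?q - 1) = (?q^2 + 1) * (?q - 1)" .
  have "?q - 1 \<noteq> 0" using CARD_field_ge_2[where 'a='a] by simp
  then have "?q^2 + ?q + 1 = ?q^2 + 1" by (rule mult_right_cancel[THEN iffD1, OF _ eq])
  then show False using CARD_field_ge_2[where 'a='a] by simp
qed

lemma lines_in_plane_meet:
  fixes l m \<pi> :: "('a::{finite,field}^4) set"
  assumes "l \<in> pg_lines" "m \<in> pg_lines" "\<pi> \<in> pg_planes" "l \<subseteq> \<pi>" "m \<subseteq> \<pi>"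
  obtains v where "v \<noteq> 0" "v \<in> l" "v \<in> m"
proof -
  have "vec.dim (l \<inter> m) \<ge> 1"
    using dim_Int_ge[of l m \<pi>] assms by (simp add: pg_subspaces_def)
  then have "\<not> l \<inter> m \<subseteq> {0}" using vec.dim_eq_0[of "l \<inter> m"] by (metis not_one_le_zero)
  then show ?thesis using that by blast
qed

lemma spread_Int_Star:
  assumes "is_spread S" "P \<in> pg_points"
  obtains l where "S \<inter> Star P = {l}"
proof -
  obtain l where "l \<in> S" "P \<subseteq> l" "\<forall>m. m \<in> S \<and> P \<subseteq> m \<longrightarrow> m = l"
    using assms unfolding is_spread_def by metis
  moreover have "S \<subseteq> pg_lines" using assms(1) by (simp add: is_spread_def)
  ultimately have "S \<inter> Star P = {l}" unfolding Star_def by blast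
  then show ?thesis using that by blast
qed

lemma spread_Int_Line:
  fixes \<pi> :: "('a::{finite,field}^4) set"
  assumes S: "is_spread S" and \<pi>: "\<pi> \<in> pg_planes"
  obtains m where "S \<inter> Line \<pi> = {m}"
proof -
  have lines: "S \<subseteq> pg_lines" using S by (simp add: is_spread_def)
  obtain m where m: "m \<in> S" "m \<subseteq> \<pi>" using spread_has_line_in_plane[OF S \<pi>] by blast
  have "l = m" if l: "l \<in> S" "l \<subseteq> \<pi>" for l
  proof -
    obtain v where "v \<noteq> 0" "v \<in> l" "v \<in> m"
      using lines_in_plane_meet[of l m \<pi>] l m lines \<pi> by blast
    then show ?thesis using spread_lines_eqI[OF S l(1) m(1)] by blast
  qed
  then have "S \<inter> Line \<pi> = {m}" using m lines unfolding Line_def by blast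
  then show ?thesis using that by blast
qed

lemma card_Int_switch:
  assumes "finite T" "T \<inter> A = {a}" "T \<inter> B = {b}" "(B - A) \<inter> L = {}" "A - B \<subseteq> L"
  shows "card (T \<inter> ((L \<union> (B - A)) - (A - B))) = card (T \<inter> L)"
proof (cases "a = b")
  case True
  then have "T \<inter> ((L \<union> (B - A)) - (A - B)) = T \<inter> L" using assms(2,3) by auto
  then show ?thesis by simp
next
  case False
  then have "a \<in> T" "a \<in> A - B" "b \<in> B - A" using assms(2,3) by auto
  then have a: "a \<in> T \<inter> L" and b: "b \<notin> L" using assms(4,5) by auto
  have "T \<inter> ((L \<union> (B - A)) - (A - B)) = insert b (T \<inter> L - {a})"
    using assms(2,3) False by auto
  then show ?thesis
    using a b assms(1) card_Suc_Diff1[of "T \<inter> L" a] by simp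
qed

theorem lemma1:
  fixes L :: "('a::{finite,field} ^ 4) set set" and x :: nat
    and P \<pi> :: "('a ^ 4) set"
  assumes "cameron_liebler L x"
    and "P \<in> pg_points" and "\<pi> \<in> pg_planes" and "P \<subseteq> \<pi>"
    and "(Line \<pi> - Star P) \<inter> L = {}"
    and "Star P - Line \<pi> \<subseteq> L"
  shows "cameron_liebler ((L \<union> (Line \<pi> - Star P)) - (Star P - Line \<pi>)) x"
  unfolding cameron_liebler_def
proof (intro conjI allI impI)
  show "L \<union> (Line \<pi> - Star P) - (Star P - Line \<pi>) \<subseteq> pg_lines"
    using assms(1) unfolding cameron_liebler_def Line_def by blast
next
  fix S :: "('a^4) set set"
  assume S: "is_spread S"
  obtain l where l: "S \<inter> Star P = {l}" using spread_Int_Star[OF S assms(2)] .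
  obtain m where m: "S \<inter> Line \<pi> = {m}" using spread_Int_Line[OF S assms(3)] .
  have "finite S" by (rule finite_subset[of _ UNIV]) auto
  then have "card (S \<inter> ((L \<union> (Line \<pi> - Star P)) - (Star P - Line \<pi>))) = card (S \<inter> L)"
    by (rule card_Int_switch[OF _ l m assms(5,6)])
  also have "\<dots> = x" using assms(1) S by (simp add: cameron_liebler_def)
  finally show "card (S \<inter> ((L \<union> (Line \<pi> - Star P)) - (Star P - Line \<pi>))) = x" .
qed

end
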